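(* Let $\ell\ge2$ be an integer, let $G$ be a torsion-free group written multiplicatively with identity $1$, and let $A_1,\dots,A_\ell$ be nonempty finite subsets of $G$ with $|A_i|\ge2$ for each $i\in[1,\ell]$. Suppose \[ |A_1A_2\cdots A_\ell|=|A_1|+\cdots+|A_\ell|-\ell+1 . \] Then there exist $g\in G$ with $g\neq1$ and $\alpha_i,\beta_i\in G$ such that for each $i\in[1,\ell]$ the set $A_i$ is a geometric progression of type $(\alpha_i,g,\beta_i)$, and $\alpha_{i+1}=\beta_i^{-1}$ for each $i\in[1,\ell-1]$.
   Context: $A_1\cdots A_\ell=\{a_1\cdots a_\ell: a_i\in A_i\}$. A nonempty finite set $B\subseteq G$ is a geometric progression of type $(a,g,b)$ ($a,b,g\in G$, $g\ne1$) if $B=\{ab,agb,\dots,ag^{|B|-1}b\}$. *)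

theory Defs
  imports "HOL-Algebra.Algebra"
begin

definition torsion_free :: "('a, 'b) monoid_scheme \<Rightarrow> bool" where
  "torsion_free G \<longleftrightarrow>
     (\<forall>x\<in>carrier G. \<forall>n::nat. n > 0 \<longrightarrow> x [^]\<^bsub>G\<^esub> n = \<one>\<^bsub>G\<^esub> \<longrightarrow> x = \<one>\<^bsub>G\<^esub>)"

fun prod_sets :: "('a, 'b) monoid_scheme \<Rightarrow> (nat \<Rightarrow> 'a set) \<Rightarrow> nat \<Rightarrow> 'a set" where
  "prod_sets G A 0 = {\<one>\<^bsub>G\<^esub>}"
| "prod_sets G A (Suc n) = set_mult G (prod_sets G A n) (A (Suc n))"

definition geom_prog :: "('a, 'b) monoid_scheme \<Rightarrow> 'a set \<Rightarrow> 'a \<Rightarrow> 'a \<Rightarrow> 'a \<Rightarrow> bool" where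
  "geom_prog G B a g b \<longleftrightarrow>
     a \<in> carrier G \<and> g \<in> carrier G \<and> b \<in> carrier G \<and> g \<noteq> \<one>\<^bsub>G\<^esub> \<and>
     finite B \<and> B \<noteq> {} \<and>
     B = {a \<otimes>\<^bsub>G\<^esub> (g [^]\<^bsub>G\<^esub> k) \<otimes>\<^bsub>G\<^esub> b | k::nat. k < card B}"

end

theory Submission
  imports Defs
begin

(* Kemperman's inequality |AB| >= |A| + |B| - 1 holds in a torsion-free group: among the
   nonempty W minimising |WB| - |W|, a smallest one is a singleton, because W \<inter> hW is again
   a minimiser for every h.  Hence equality for A_1 ... A_l forces equality for every
   consecutive pair A_j, A_(j+1); call such a pair (A, B) critical.  By induction on |A| + |B|
   (passing to a critical subpair, or, if there is none, counting representations of products,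
   which leaves |A| = 2 or |B| = 2), there is x \<noteq> 1 with |xB - B| = 1, which means
   B = {c, xc, ..., x^(n-1) c}.  Moreover, in a critical pair A is a right progression with
   ratio x iff B is a left progression with ratio x.  Along the chain, A_j = \<alpha> g^k \<beta> is a
   right progression with ratio \<beta>^-1 g \<beta>, so A_(j+1) = \<beta>^-1 g^k \<beta> c. *)

(* The ASCII syntax of multiset inclusion would clash with left cosets x <# A. *)
no_notation (ASCII) subset_mset (infix \<open><#\<close> 50)

section \<open>The opposite group\<close>

text \<open>Every statement about right cosets below is the mirror image of one about left cosets,
  obtained by applying the latter in the opposite group.\<close>

definition opposite_group :: "('a, 'b) monoid_scheme \<Rightarrow> ('a, 'b) monoid_scheme" where
  "opposite_group G = G\<lparr>mult := \<lambda>x y. y \<otimes>\<^bsub>G\<^esub> x\<rparr>"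

lemma opposite_group_simps [simp]:
  "carrier (opposite_group G) = carrier G"
  "\<one>\<^bsub>opposite_group G\<^esub> = \<one>\<^bsub>G\<^esub>"
  "x \<otimes>\<^bsub>opposite_group G\<^esub> y = y \<otimes>\<^bsub>G\<^esub> x"
  by (simp_all add: opposite_group_def)

lemma set_mult_opposite_group [simp]: "A <#>\<^bsub>opposite_group G\<^esub> B = B <#>\<^bsub>G\<^esub> A"
  by (auto simp: set_mult_def)

lemma l_coset_opposite_group [simp]: "x <#\<^bsub>opposite_group G\<^esub> A = A #>\<^bsub>G\<^esub> x"
  by (simp add: l_coset_def r_coset_def)

lemma r_coset_opposite_group [simp]: "A #>\<^bsub>opposite_group G\<^esub> x = x <#\<^bsub>G\<^esub> A"
  by (simp add: l_coset_def r_coset_def)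

lemma (in monoid) nat_pow_opposite_group [simp]:
  "x \<in> carrier G \<Longrightarrow> x [^]\<^bsub>opposite_group G\<^esub> (n::nat) = x [^] n"
  by (induction n) (simp_all, metis nat_pow_Suc nat_pow_Suc2)

lemma (in group) group_opposite_group: "group (opposite_group G)"
  by (rule groupI) (auto simp: m_assoc intro: l_inv_ex)

lemma (in group) inv_opposite_group [simp]:
  "x \<in> carrier G \<Longrightarrow> inv\<^bsub>opposite_group G\<^esub> x = inv x"
  by (rule group.inv_equality[OF group_opposite_group]) simp_all

locale torsion_free_group = group +
  assumes torsion_free: "torsion_free G"

lemma (in torsion_free_group) torsion_free_group_opposite_group:
  "torsion_free_group (opposite_group G)"
  using torsion_free group_opposite_group
  by (simp add: torsion_free_group_def torsion_free_group_axioms_def torsion_free_def)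

lemma card_Un_eq_card_plus_card_Diff:
  "finite A \<Longrightarrow> finite B \<Longrightarrow> card (A \<union> B) = card A + card (B - A)"
  by (metis Un_Diff_cancel card_Un_disjoint finite_Diff Diff_disjoint)

lemma finite_set_mult: "finite A \<Longrightarrow> finite B \<Longrightarrow> finite (A <#>\<^bsub>G\<^esub> B)"
  by (simp add: set_mult_def)

lemma set_mult_Un_left: "(A \<union> A') <#>\<^bsub>G\<^esub> B = (A <#>\<^bsub>G\<^esub> B) \<union> (A' <#>\<^bsub>G\<^esub> B)"
  by (auto simp: set_mult_def)

lemma card_set_mult_Int_Un_le:
  assumes "finite A" "finite A'" "finite B"
  shows "card ((A \<inter> A') <#>\<^bsub>G\<^esub> B) + card ((A \<union> A') <#>\<^bsub>G\<^esub> B)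
           \<le> card (A <#>\<^bsub>G\<^esub> B) + card (A' <#>\<^bsub>G\<^esub> B)"
proof -
  have fin: "finite (A <#>\<^bsub>G\<^esub> B)" "finite (A' <#>\<^bsub>G\<^esub> B)"
    using assms by (simp_all add: finite_set_mult)
  have "(A \<inter> A') <#>\<^bsub>G\<^esub> B \<subseteq> (A <#>\<^bsub>G\<^esub> B) \<inter> (A' <#>\<^bsub>G\<^esub> B)"
    by (simp add: mono_set_mult)
  then have "card ((A \<inter> A') <#>\<^bsub>G\<^esub> B) \<le> card ((A <#>\<^bsub>G\<^esub> B) \<inter> (A' <#>\<^bsub>G\<^esub> B))"
    using fin by (simp add: card_mono)
  then show ?thesis
    using card_Un_Int[OF fin] by (simp add: set_mult_Un_left)
qed

context group
begin

lemma l_coset_eq_image: "x <# A = (\<otimes>) x ` A"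
  by (auto simp: l_coset_def)

lemma card_l_coset: "A \<subseteq> carrier G \<Longrightarrow> x \<in> carrier G \<Longrightarrow> card (x <# A) = card A"
  unfolding l_coset_eq_image by (rule card_image, rule inj_onI) (metis l_cancel subsetD)

lemma card_le_card_set_mult:
  assumes "finite A" "A \<subseteq> carrier G" "finite B" "b \<in> B" "B \<subseteq> carrier G"
  shows "card A \<le> card (A <#> B)"
proof -
  have "card A = card (A #> b)"
    using assms by (intro card_rcosets_equal rcosetsI) auto
  also have "\<dots> \<le> card (A <#> B)"
    using assms by (intro card_mono finite_set_mult) (auto simp: r_coset_eq_set_mult mono_set_mult)
  finally show ?thesis .
qed

lemma card_l_coset_Diff_plus_card:
  assumes "finite B" "B \<subseteq> carrier G" "x \<in> carrier G"
  shows "card ((x <# B) - B) + card {b \<in> B. x \<otimes> b \<in> B} = card B"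
proof -
  have "{b \<in> B. x \<otimes> b \<in> B} \<subseteq> carrier G"
    using assms(2) by auto
  moreover have "x <# {b \<in> B. x \<otimes> b \<in> B} = (x <# B) \<inter> B"
    by (auto simp: l_coset_def)
  ultimately have "card {b \<in> B. x \<otimes> b \<in> B} = card ((x <# B) \<inter> B)"
    using card_l_coset assms(3) by metis
  moreover have "card ((x <# B) - B) = card (x <# B) - card ((x <# B) \<inter> B)"
    using assms by (intro card_Diff_subset_Int) simp
  moreover have "card ((x <# B) \<inter> B) \<le> card (x <# B)"
    using assms by (intro card_mono) (simp_all add: l_coset_eq_image)
  ultimately show ?thesis
    using assms card_l_coset[of B x] by simp
qed

lemma Un_r_coset_set_mult_subset:
  assumes "A \<subseteq> carrier G" "B \<subseteq> carrier G" "x \<in> carrier G"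
  shows "(A \<union> (A #> x)) <#> {b \<in> B. x \<otimes> b \<in> B} \<subseteq> A <#> B"
proof
  fix y
  assume "y \<in> (A \<union> (A #> x)) <#> {b \<in> B. x \<otimes> b \<in> B}"
  then obtain a b where "a \<in> A \<union> (A #> x)" "b \<in> B" "x \<otimes> b \<in> B" "y = a \<otimes> b"
    by (auto simp: set_mult_def)
  moreover have "a \<otimes> x \<otimes> b = a \<otimes> (x \<otimes> b)" if "a \<in> A" for a
    using that assms \<open>b \<in> B\<close> by (auto simp: m_assoc subset_iff)
  ultimately show "y \<in> A <#> B"
    by (auto simp: set_mult_def r_coset_def)
qed

lemma card_doubleton_set_mult:
  assumes a: "a1 \<in> carrier G" "a2 \<in> carrier G" and B: "finite B" "B \<subseteq> carrier G"
  shows "card ({a1, a2} <#> B) = card B + card (((inv a1 \<otimes> a2) <# B) - B)"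
proof -
  define x where "x = inv a1 \<otimes> a2"
  have x: "x \<in> carrier G" "a1 \<otimes> x = a2"
    using a by (simp_all add: x_def m_assoc[symmetric])
  have xB: "x <# B \<subseteq> carrier G"
    using B x by (simp add: l_coset_subset_G)
  have "{a1, a2} <#> B = (a1 <# B) \<union> (a2 <# B)"
    by (auto simp: set_mult_def l_coset_def)
  also have "a2 <# B = a1 <# (x <# B)"
    using a B x by (simp add: lcos_m_assoc)
  finally have "{a1, a2} <#> B = (a1 <# B) \<union> (a1 <# (x <# B))" .
  moreover have "(a1 <# (x <# B)) - (a1 <# B) = a1 <# ((x <# B) - B)"
    using a B xB unfolding l_coset_eq_image
    by (intro inj_on_image_set_diff[symmetric, of _ "carrier G"]) (auto intro: inj_onI)
  ultimately have "card ({a1, a2} <#> B) = card (a1 <# B) + card (a1 <# ((x <# B) - B))"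
    using B by (simp add: card_Un_eq_card_plus_card_Diff l_coset_eq_image)
  moreover have "(x <# B) - B \<subseteq> carrier G"
    using xB by blast
  ultimately show ?thesis
    using a B by (simp add: x_def card_l_coset)
qed

lemma pow_conj:
  assumes "g \<in> carrier G" "b \<in> carrier G"
  shows "(inv b \<otimes> g \<otimes> b) [^] (k::nat) = inv b \<otimes> g [^] k \<otimes> b"
proof (induction k)
  case (Suc k)
  have "b \<otimes> (inv b \<otimes> y) = y" if "y \<in> carrier G" for y
    using assms that by (simp add: m_assoc[symmetric])
  with Suc show ?case
    using assms by (simp add: m_assoc)
qed (use assms in simp)

end

context torsion_free_group
begin

lemma pow_eq_one_imp_one: "x \<in> carrier G \<Longrightarrow> 0 < n \<Longrightarrow> x [^] (n::nat) = \<one> \<Longrightarrow> x = \<one>"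
  using torsion_free by (auto simp: torsion_free_def)

lemma pow_inject:
  assumes "x \<in> carrier G" "x \<noteq> \<one>" "x [^] (i::nat) = x [^] (j::nat)"
  shows "i = j"
proof -
  have "x [^] (i - j) = \<one>" "x [^] (j - i) = \<one>"
    using assms(1,3) by (simp_all add: pow_eq_div2)
  then show ?thesis
    using pow_eq_one_imp_one assms(1,2) by (metis diff_is_0_eq gr0I le_antisym)
qed

lemma l_coset_subset_self_imp_one:
  assumes "finite A" "A \<noteq> {}" "A \<subseteq> carrier G" "x \<in> carrier G" "x <# A \<subseteq> A"
  shows "x = \<one>"
proof (rule ccontr)
  assume "x \<noteq> \<one>"
  obtain a where a: "a \<in> A"
    using assms(2) by blast
  have "x [^] n \<otimes> a \<in> A" for n :: nat
  proof (induction n)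
    case (Suc n)
    then have "x \<otimes> (x [^] n \<otimes> a) \<in> A"
      using assms(5) by (auto simp: l_coset_def)
    then show ?case
      using a assms(3,4) by (metis m_assoc nat_pow_Suc2 nat_pow_closed subsetD)
  qed (use a assms(3) in auto)
  moreover have "inj (\<lambda>n::nat. x [^] n \<otimes> a)"
  proof (rule injI)
    fix m n :: nat
    assume "x [^] m \<otimes> a = x [^] n \<otimes> a"
    then have "x [^] m = x [^] n"
      using a assms(3,4) by (simp add: subsetD)
    then show "m = n"
      by (rule pow_inject[OF assms(4) \<open>x \<noteq> \<one>\<close>])
  qed
  ultimately show False
    using assms(1) by (meson finite_subset image_subsetI range_inj_infinite)
qed

lemma r_coset_subset_self_imp_one:
  "finite A \<Longrightarrow> A \<noteq> {} \<Longrightarrow> A \<subseteq> carrier G \<Longrightarrow> x \<in> carrier G \<Longrightarrow> A #> x \<subseteq> A \<Longrightarrow> x = \<one>"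
  using torsion_free_group.l_coset_subset_self_imp_one[OF torsion_free_group_opposite_group, of A x]
  by simp

lemma self_subset_l_coset_imp_one:
  assumes "finite A" "A \<noteq> {}" "A \<subseteq> carrier G" "x \<in> carrier G" "A \<subseteq> x <# A"
  shows "x = \<one>"
proof -
  have "finite (x <# A)"
    using assms(1) by (simp add: l_coset_eq_image)
  then have "A = x <# A"
    using assms(3-5) by (intro card_subset_eq) (simp_all add: card_l_coset)
  then show ?thesis
    using l_coset_subset_self_imp_one assms by simp
qed

end

section \<open>Kemperman's inequality\<close>

text \<open>If \<open>W\<close> minimises \<open>|YB| - |Y|\<close>, then so does \<open>W \<inter> hW\<close>: the excess is submodular
  and invariant under left translation.\<close>

lemma (in group) minimal_excess_Int_l_coset:
  assumes W: "finite W" "W \<subseteq> carrier G" and B: "finite B" "B \<subseteq> carrier G"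
    and min: "\<And>Y. finite Y \<Longrightarrow> Y \<noteq> {} \<Longrightarrow> Y \<subseteq> carrier G \<Longrightarrow>
                card (W <#> B) + card Y \<le> card (Y <#> B) + card W"
    and h: "h \<in> carrier G" and ne: "W \<inter> (h <# W) \<noteq> {}"
  shows "card ((W \<inter> (h <# W)) <#> B) + card W = card (W <#> B) + card (W \<inter> (h <# W))"
proof -
  define Z where "Z = h <# W"
  have Z: "finite Z" "Z \<subseteq> carrier G" "card Z = card W"
    unfolding Z_def using W h
    by (simp add: l_coset_eq_image, simp add: l_coset_subset_G, simp add: card_l_coset)
  have "Z <#> B = h <# (W <#> B)"
    using W B h by (simp add: Z_def setmult_lcos_assoc)
  then have ZB: "card (Z <#> B) = card (W <#> B)"
    using W B h by (simp add: card_l_coset set_mult_closed)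
  have "card (W \<inter> Z) + card (W \<union> Z) = card W + card Z"
    using card_Un_Int[OF W(1) Z(1)] by simp
  moreover have "card ((W \<inter> Z) <#> B) + card ((W \<union> Z) <#> B) \<le> card (W <#> B) + card (Z <#> B)"
    using W Z B by (intro card_set_mult_Int_Un_le)
  moreover have "card (W <#> B) + card (W \<union> Z) \<le> card ((W \<union> Z) <#> B) + card W"
    using W Z ne by (intro min) auto
  moreover have "card (W <#> B) + card (W \<inter> Z) \<le> card ((W \<inter> Z) <#> B) + card W"
    using W Z ne by (intro min) (auto simp: Z_def)
  ultimately show ?thesis
    using Z(3) ZB unfolding Z_def[symmetric] by linarith
qed

lemma (in torsion_free_group) smallest_minimal_excess_card_le_1:
  assumes W: "finite W" "W \<subseteq> carrier G" and B: "finite B" "B \<subseteq> carrier G"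
    and min: "\<And>Y. finite Y \<Longrightarrow> Y \<noteq> {} \<Longrightarrow> Y \<subseteq> carrier G \<Longrightarrow>
                card (W <#> B) + card Y \<le> card (Y <#> B) + card W"
    and smallest: "\<And>Y. Y \<subseteq> W \<Longrightarrow> Y \<noteq> {} \<Longrightarrow>
                card (Y <#> B) + card W = card (W <#> B) + card Y \<Longrightarrow> card W \<le> card Y"
  shows "card W \<le> 1"
proof -
  have "x' = x" if "x \<in> W" "x' \<in> W" for x x'
  proof -
    define h where "h = x' \<otimes> inv x"
    have "x \<in> carrier G" "x' \<in> carrier G"
      using that W by auto
    then have h: "h \<in> carrier G" "x' = h \<otimes> x"
      by (simp_all add: h_def m_assoc)
    then have "x' \<in> W \<inter> (h <# W)"
      using that by (auto simp: l_coset_def)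
    then have "card W \<le> card (W \<inter> (h <# W))"
      using minimal_excess_Int_l_coset[OF W B min h(1)] by (intro smallest) auto
    then have "W \<subseteq> h <# W"
      using card_seteq[OF W(1), of "W \<inter> (h <# W)"] by auto
    then have "h = \<one>"
      using W h \<open>x' \<in> W\<close> by (intro self_subset_l_coset_imp_one) auto
    then show ?thesis
      using h \<open>x \<in> carrier G\<close> by simp
  qed
  then show ?thesis
    using W(1) by (simp add: card_le_Suc0_iff_eq)
qed

theorem (in torsion_free_group) card_set_mult_ge:
  assumes A: "finite A" "A \<noteq> {}" "A \<subseteq> carrier G" and B: "finite B" "B \<noteq> {}" "B \<subseteq> carrier G"
  shows "card A + card B \<le> card (A <#> B) + 1"
proof -
  define adm where "adm Y \<longleftrightarrow> finite Y \<and> Y \<noteq> {} \<and> Y \<subseteq> carrier G" for Y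
  define exc where "exc Y = card (Y <#> B) - card Y" for Y
  have card_exc: "card (Y <#> B) = exc Y + card Y" if "adm Y" for Y
    using that B card_le_card_set_mult[of Y B] by (auto simp: adm_def exc_def)
  obtain W0 where "adm W0" and W0: "\<forall>Y. adm Y \<longrightarrow> exc W0 \<le> exc Y"
    using ex_has_least_nat[of adm A exc] A by (auto simp: adm_def)
  obtain W where W: "adm W" "exc W = exc W0"
    and W_least: "\<forall>Y. adm Y \<and> exc Y = exc W0 \<longrightarrow> card W \<le> card Y"
    using ex_has_least_nat[of "\<lambda>Y. adm Y \<and> exc Y = exc W0" W0 card] \<open>adm W0\<close> by blast
  have "card W \<le> 1"
  proof (rule smallest_minimal_excess_card_le_1)
    show "card (W <#> B) + card Y \<le> card (Y <#> B) + card W"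
      if "finite Y" "Y \<noteq> {}" "Y \<subseteq> carrier G" for Y
    proof -
      have "adm Y"
        using that by (simp add: adm_def)
      then have "exc W \<le> exc Y"
        using W0 W(2) by simp
      then show ?thesis
        using card_exc[OF \<open>adm Y\<close>] card_exc[OF W(1)] by linarith
    qed
    show "card W \<le> card Y"
      if "Y \<subseteq> W" "Y \<noteq> {}" "card (Y <#> B) + card W = card (W <#> B) + card Y" for Y
    proof -
      have "adm Y"
        using that W(1) by (auto simp: adm_def intro: finite_subset)
      then show ?thesis
        using that W W_least card_exc[of Y] card_exc[OF W(1)] by auto
    qed
  qed (use W(1) B in \<open>auto simp: adm_def\<close>)
  then obtain w where "W = {w}"
    using W(1) by (auto simp: adm_def card_le_Suc0_iff_eq)
  then have "exc W + 1 = card B"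
    using card_exc[OF W(1)] B W(1) card_l_coset[of B w] by (simp add: adm_def l_coset_eq_set_mult)
  moreover have "exc W \<le> exc A"
    using W0 W A by (auto simp: adm_def)
  ultimately show ?thesis
    using card_exc[of A] A by (auto simp: adm_def)
qed

section \<open>Critical pairs\<close>

definition critical_pair :: "('a, 'b) monoid_scheme \<Rightarrow> 'a set \<Rightarrow> 'a set \<Rightarrow> bool" where
  "critical_pair G A B \<longleftrightarrow>
     finite A \<and> A \<noteq> {} \<and> A \<subseteq> carrier G \<and> finite B \<and> B \<noteq> {} \<and> B \<subseteq> carrier G \<and>
     card (A <#>\<^bsub>G\<^esub> B) + 1 = card A + card B"

text \<open>In a torsion-free group, \<open>|xB - B| = 1\<close> says exactly that
  \<open>B = {c, xc, ..., x^(|B|-1) c}\<close>, and dually for right ratios.\<close>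

definition left_ratio :: "('a, 'b) monoid_scheme \<Rightarrow> 'a \<Rightarrow> 'a set \<Rightarrow> bool" where
  "left_ratio G x B \<longleftrightarrow> x \<in> carrier G \<and> x \<noteq> \<one>\<^bsub>G\<^esub> \<and> card ((x <#\<^bsub>G\<^esub> B) - B) = 1"

definition right_ratio :: "('a, 'b) monoid_scheme \<Rightarrow> 'a \<Rightarrow> 'a set \<Rightarrow> bool" where
  "right_ratio G x A \<longleftrightarrow> x \<in> carrier G \<and> x \<noteq> \<one>\<^bsub>G\<^esub> \<and> card ((A #>\<^bsub>G\<^esub> x) - A) = 1"

lemma critical_pair_opposite_group [simp]:
  "critical_pair (opposite_group G) B A \<longleftrightarrow> critical_pair G A B"
  by (auto simp: critical_pair_def)

lemma left_ratio_opposite_group [simp]: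
  "left_ratio (opposite_group G) x A \<longleftrightarrow> right_ratio G x A"
  by (simp add: left_ratio_def right_ratio_def)

lemma right_ratio_opposite_group [simp]:
  "right_ratio (opposite_group G) x B \<longleftrightarrow> left_ratio G x B"
  by (simp add: left_ratio_def right_ratio_def)

context torsion_free_group
begin

lemma critical_pair_Int_l_coset:
  assumes "critical_pair G A B" "h \<in> carrier G" "A \<inter> (h <# A) \<noteq> {}"
  shows "critical_pair G (A \<inter> (h <# A)) B"
proof -
  have "card (A <#> B) + card Y \<le> card (Y <#> B) + card A"
    if "finite Y" "Y \<noteq> {}" "Y \<subseteq> carrier G" for Y
    using assms(1) card_set_mult_ge[OF that, of B] by (auto simp: critical_pair_def)
  then have "card ((A \<inter> (h <# A)) <#> B) + card A = card (A <#> B) + card (A \<inter> (h <# A))"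
    using assms by (intro minimal_excess_Int_l_coset) (auto simp: critical_pair_def)
  then show ?thesis
    using assms by (auto simp: critical_pair_def)
qed

lemma card_Int_l_coset_le_1:
  assumes crit: "critical_pair G A B"
    and minimal: "\<And>S. S \<subset> A \<Longrightarrow> 2 \<le> card S \<Longrightarrow> \<not> critical_pair G S B"
    and h: "h \<in> carrier G" "h \<noteq> \<one>"
  shows "card (A \<inter> (h <# A)) \<le> 1"
proof (rule ccontr)
  assume two: "\<not> card (A \<inter> (h <# A)) \<le> 1"
  then have "A \<inter> (h <# A) \<noteq> {}"
    by auto
  then have "critical_pair G (A \<inter> (h <# A)) B"
    using crit h critical_pair_Int_l_coset by blast
  then have "A \<subseteq> h <# A"
    using minimal[of "A \<inter> (h <# A)"] two by auto
  then show False
    using crit h self_subset_l_coset_imp_one by (auto simp: critical_pair_def)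
qed

lemma set_mult_Diff_singleton_eq:
  assumes crit: "critical_pair G A B" and b: "b \<in> B" "B - {b} \<noteq> {}"
    and not_crit: "\<not> critical_pair G A (B - {b})"
  shows "A <#> (B - {b}) = A <#> B"
proof -
  have A: "finite A" "A \<noteq> {}" "A \<subseteq> carrier G" and B: "finite B" "B \<subseteq> carrier G"
    and tight: "card (A <#> B) + 1 = card A + card B"
    using crit by (auto simp: critical_pair_def)
  have "card A + card (B - {b}) \<le> card (A <#> (B - {b})) + 1"
    using A B b by (intro card_set_mult_ge) auto
  moreover have "card (A <#> (B - {b})) + 1 \<noteq> card A + card (B - {b})"
    using not_crit A B b(2) by (auto simp: critical_pair_def)
  moreover have "card (B - {b}) + 1 = card B"
    using card_Suc_Diff1[OF B(1) b(1)] by simp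
  ultimately have "card (A <#> B) \<le> card (A <#> (B - {b}))"
    using tight by linarith
  then show ?thesis
    using A B by (intro card_seteq finite_set_mult) (auto simp: mono_set_mult)
qed

lemma minimal_critical_pair_card_less:
  assumes crit: "critical_pair G A B" and B3: "3 \<le> card B"
    and minimal_A: "\<And>S. S \<subset> A \<Longrightarrow> 2 \<le> card S \<Longrightarrow> \<not> critical_pair G S B"
    and minimal_B: "\<And>T. T \<subset> B \<Longrightarrow> 2 \<le> card T \<Longrightarrow> \<not> critical_pair G A T"
  shows "card A < card B"
proof -
  have A: "A \<subseteq> carrier G" and B: "finite B" "B \<subseteq> carrier G"
    using crit by (auto simp: critical_pair_def)
  obtain b where b: "b \<in> B"
    using B3 by fastforce
  then have "2 \<le> card (B - {b})"
    using B B3 by simp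
  then have "B - {b} \<noteq> {}"
    using card_gt_0_iff by fastforce
  then have "A <#> (B - {b}) = A <#> B"
    using crit b minimal_B[of "B - {b}"] \<open>2 \<le> card (B - {b})\<close>
    by (intro set_mult_Diff_singleton_eq) auto
  then have "a \<otimes> b \<in> A <#> (B - {b})" if "a \<in> A" for a
    using that b by (auto simp: set_mult_def)
  then have "\<exists>c\<in>B - {b}. \<exists>a'\<in>A. a \<otimes> b = a' \<otimes> c" if "a \<in> A" for a
    using that by (auto simp: set_mult_def)
  then obtain \<psi> where \<psi>: "\<And>a. a \<in> A \<Longrightarrow> \<psi> a \<in> B - {b} \<and> (\<exists>a'\<in>A. a \<otimes> b = a' \<otimes> \<psi> a)"
    by metis
  txt \<open>If \<open>\<psi> a1 = \<psi> a2 = c\<close>, then \<open>a2 = h a1\<close> and \<open>a2' = h a1'\<close> for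
    \<open>h = a2 a1^-1\<close>, and \<open>a2 \<noteq> a2'\<close> as \<open>c \<noteq> b\<close>.\<close>
  have "inj_on \<psi> A"
  proof (rule inj_onI)
    fix a1 a2
    assume a: "a1 \<in> A" "a2 \<in> A" and same: "\<psi> a1 = \<psi> a2"
    define c where "c = \<psi> a1"
    obtain a1' a2' where a': "a1' \<in> A" "a2' \<in> A" "a1 \<otimes> b = a1' \<otimes> c" "a2 \<otimes> b = a2' \<otimes> c"
      using \<psi> a same c_def by metis
    have c: "c \<in> B - {b}"
      using \<psi> a c_def by blast
    have carr: "a1 \<in> carrier G" "a2 \<in> carrier G" "a1' \<in> carrier G" "a2' \<in> carrier G"
      "b \<in> carrier G" "c \<in> carrier G"
      using a a' b c A B by auto
    define h where "h = a2 \<otimes> inv a1"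
    have h: "h \<in> carrier G" "a2 = h \<otimes> a1"
      using carr by (simp_all add: h_def m_assoc)
    have "a1' = a1 \<otimes> b \<otimes> inv c" "a2' = a2 \<otimes> b \<otimes> inv c"
      using a'(3,4) carr by (simp_all add: inv_solve_right)
    then have "a2' = h \<otimes> a1'"
      using carr h by (simp add: m_assoc)
    moreover have "a2 \<noteq> a2'"
      using a'(4) c carr by auto
    ultimately have "card {a2, a2'} \<le> card (A \<inter> (h <# A))"
      using a a' h crit by (intro card_mono) (auto simp: l_coset_def critical_pair_def)
    then have "\<not> card (A \<inter> (h <# A)) \<le> 1"
      using \<open>a2 \<noteq> a2'\<close> by simp
    then have "h = \<one>"
      using card_Int_l_coset_le_1[OF crit minimal_A h(1)] by blast
    then show "a1 = a2"
      using h carr by simp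
  qed
  then have "card A \<le> card (B - {b})"
    using \<psi> B by (intro card_inj_on_le) auto
  then show ?thesis
    using card_Suc_Diff1[OF B(1) b] by linarith
qed

lemma minimal_critical_pair_card_le_2:
  assumes "critical_pair G A B"
    and "\<And>S. S \<subset> A \<Longrightarrow> 2 \<le> card S \<Longrightarrow> \<not> critical_pair G S B"
    and "\<And>T. T \<subset> B \<Longrightarrow> 2 \<le> card T \<Longrightarrow> \<not> critical_pair G A T"
  shows "card A \<le> 2 \<or> card B \<le> 2"
proof (rule ccontr)
  assume "\<not> ?thesis"
  then have "card A < card B" "card B < card A"
    using minimal_critical_pair_card_less[OF assms(1) _ assms(2,3)]
      torsion_free_group.minimal_critical_pair_card_less[OF torsion_free_group_opposite_group,
        of B A] assms
    by auto
  then show False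
    by simp
qed

lemma critical_pair_right_ratio_of_left_ratio:
  assumes crit: "critical_pair G A B" and B2: "2 \<le> card B" and x: "left_ratio G x B"
  shows "right_ratio G x A"
proof -
  have A: "finite A" "A \<noteq> {}" "A \<subseteq> carrier G" and B: "finite B" "B \<subseteq> carrier G"
    and tight: "card (A <#> B) + 1 = card A + card B"
    using crit by (auto simp: critical_pair_def)
  have xG: "x \<in> carrier G" "x \<noteq> \<one>"
    using x by (simp_all add: left_ratio_def)
  define B' where "B' = {b \<in> B. x \<otimes> b \<in> B}"
  have B'_card: "card B' + 1 = card B"
    using card_l_coset_Diff_plus_card[OF B xG(1)] x by (simp add: B'_def left_ratio_def)
  then have "0 < card B'"
    using B2 by linarith
  then have B': "finite B'" "B' \<noteq> {}" "B' \<subseteq> carrier G"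
    using B by (auto simp: B'_def card_gt_0_iff)
  define A' where "A' = A \<union> (A #> x)"
  have A': "finite A'" "A' \<noteq> {}" "A' \<subseteq> carrier G"
    using A xG by (auto simp: A'_def r_coset_def)
  have "card A' + card B' \<le> card (A' <#> B') + 1"
    using A' B' by (rule card_set_mult_ge)
  also have "card (A' <#> B') \<le> card (A <#> B)"
    using A B Un_r_coset_set_mult_subset[OF A(3) B(2) xG(1)] unfolding A'_def B'_def
    by (intro card_mono finite_set_mult)
  finally have "card A' + card B' \<le> card (A <#> B) + 1"
    by simp
  moreover have "card A' = card A + card ((A #> x) - A)"
    using A by (simp add: A'_def card_Un_eq_card_plus_card_Diff r_coset_def)
  ultimately have "card ((A #> x) - A) \<le> 1"
    using tight B'_card by linarith
  moreover have "\<not> A #> x \<subseteq> A"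
    using r_coset_subset_self_imp_one A xG by blast
  then have "card ((A #> x) - A) \<noteq> 0"
    using A by (simp add: r_coset_def)
  ultimately show ?thesis
    using xG by (simp add: right_ratio_def)
qed

lemma critical_pair_left_ratio_of_right_ratio:
  "critical_pair G A B \<Longrightarrow> 2 \<le> card A \<Longrightarrow> right_ratio G x A \<Longrightarrow> left_ratio G x B"
  using torsion_free_group.critical_pair_right_ratio_of_left_ratio[OF
      torsion_free_group_opposite_group, of B A x]
  by simp

end

section \<open>Geometric progressions\<close>

context torsion_free_group
begin

lemma l_coset_progression_diff:
  assumes x: "x \<in> carrier G" "x \<noteq> \<one>" and c: "c \<in> carrier G" and n: "0 < (n::nat)"
  shows "(x <# {x [^] k \<otimes> c | k. k < n}) - {x [^] k \<otimes> c | k. k < n} = {x [^] n \<otimes> c}"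
proof -
  have mem: "x [^] m \<otimes> c \<in> {x [^] k \<otimes> c | k. k < n} \<longleftrightarrow> m < n" for m
  proof
    assume "x [^] m \<otimes> c \<in> {x [^] k \<otimes> c | k. k < n}"
    then obtain k where "k < n" "x [^] m \<otimes> c = x [^] k \<otimes> c"
      by auto
    then have "x [^] m = x [^] k"
      using x c by simp
    then show "m < n"
      using pow_inject[OF x] \<open>k < n\<close> by metis
  qed auto
  have step: "x \<otimes> (x [^] k \<otimes> c) = x [^] Suc k \<otimes> c" for k :: nat
    using x c by (metis m_assoc nat_pow_Suc2 nat_pow_closed)
  show ?thesis
  proof (intro equalityI subsetI)
    fix z
    assume "z \<in> (x <# {x [^] k \<otimes> c | k. k < n}) - {x [^] k \<otimes> c | k. k < n}"
    then obtain k where k: "k < n" "z = x [^] Suc k \<otimes> c" "z \<notin> {x [^] k \<otimes> c | k. k < n}"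
      by (auto simp: l_coset_def step)
    then have "\<not> Suc k < n"
      using mem[of "Suc k"] by blast
    then have "Suc k = n"
      using k(1) by simp
    then show "z \<in> {x [^] n \<otimes> c}"
      using k(2) by simp
  next
    fix z
    assume "z \<in> {x [^] n \<otimes> c}"
    moreover have "x [^] n \<otimes> c = x \<otimes> (x [^] (n - 1) \<otimes> c)"
      using step[of "n - 1"] n by simp
    moreover have "x [^] (n - 1) \<otimes> c \<in> {x [^] k \<otimes> c | k. k < n}"
      using n by auto
    ultimately show "z \<in> (x <# {x [^] k \<otimes> c | k. k < n}) - {x [^] k \<otimes> c | k. k < n}"
      using mem[of n] by (auto simp: l_coset_def)
  qed
qed

lemma progression_left_ratio:
  "x \<in> carrier G \<Longrightarrow> x \<noteq> \<one> \<Longrightarrow> c \<in> carrier G \<Longrightarrow> 0 < (n::nat) \<Longrightarrow>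
    left_ratio G x {x [^] k \<otimes> c | k. k < n}"
  by (simp add: left_ratio_def l_coset_progression_diff)

lemma progression_right_ratio:
  assumes "x \<in> carrier G" "x \<noteq> \<one>" "c \<in> carrier G" "0 < (n::nat)"
  shows "right_ratio G x {c \<otimes> x [^] k | k. k < n}"
  using assms torsion_free_group.progression_left_ratio[OF torsion_free_group_opposite_group, of x c n]
  by simp

lemma l_coset_diff_remove_top:
  assumes B: "B \<subseteq> carrier G" and x: "x \<in> carrier G" "x \<noteq> \<one>"
    and top: "(x <# B) - B = {x \<otimes> t}" "t \<in> B" and fin: "finite (B - {t})" "B - {t} \<noteq> {}"
  shows "(x <# (B - {t})) - (B - {t}) = {t}"
proof -
  have "z = t" if "z \<in> (x <# (B - {t})) - (B - {t})" for z
  proof (rule ccontr)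
    assume "z \<noteq> t"
    have "z \<in> x <# (B - {t})"
      using that by simp
    then obtain b where b: "b \<in> B - {t}" "z = x \<otimes> b"
      unfolding l_coset_def by blast
    then have "z \<in> (x <# B) - B"
      using that \<open>z \<noteq> t\<close> by (auto simp: l_coset_def)
    then have "x \<otimes> b = x \<otimes> t"
      using top b by simp
    then show False
      using b B x top(2) by (auto simp: subset_iff)
  qed
  moreover have "\<not> x <# (B - {t}) \<subseteq> B - {t}"
    using l_coset_subset_self_imp_one B x fin by blast
  ultimately show ?thesis
    by blast
qed

lemma left_ratio_imp_progression:
  assumes "finite B" "B \<subseteq> carrier G" "left_ratio G x B"
  shows "\<exists>c\<in>carrier G. B = {x [^] k \<otimes> c | k. k < card B}"
  using assms
proof (induction "card B" arbitrary: B)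
  case 0
  then show ?case
    by (simp add: left_ratio_def l_coset_def)
next
  case (Suc n)
  have x: "x \<in> carrier G" "x \<noteq> \<one>"
    using Suc.prems by (simp_all add: left_ratio_def)
  obtain y where y: "(x <# B) - B = {y}"
    using Suc.prems(3) by (auto simp: left_ratio_def card_1_singleton_iff)
  then have "y \<in> (x <# B) - B"
    by simp
  then obtain t where t: "t \<in> B" "y = x \<otimes> t"
    by (auto simp: l_coset_def)
  show ?case
  proof (cases "n = 0")
    case True
    then have "card B = 1"
      using Suc.hyps(2) by simp
    then obtain u where "B = {u}"
      by (rule card_1_singletonE)
    then show ?thesis
      using t(1) Suc.prems(2) by (intro bexI[of _ t]) auto
  next
    case False
    define B' where "B' = B - {t}"
    have "card B' = n"
      using Suc.hyps(2) Suc.prems(1) t(1) by (simp add: B'_def)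
    moreover have "finite B'" "B' \<subseteq> carrier G"
      using Suc.prems(1,2) by (auto simp: B'_def)
    ultimately have B': "finite B'" "B' \<subseteq> carrier G" "card B' = n" "B' \<noteq> {}"
      using False by auto
    then have top: "(x <# B') - B' = {t}"
      unfolding B'_def using l_coset_diff_remove_top Suc.prems(2) x y t by simp
    then obtain c where c: "c \<in> carrier G" "B' = {x [^] k \<otimes> c | k. k < n}"
      using Suc.hyps(1)[of B'] B' x by (auto simp: left_ratio_def)
    then have "t = x [^] n \<otimes> c"
      using top l_coset_progression_diff[OF x c(1)] False by simp
    then have "B = {x [^] k \<otimes> c | k. k < Suc n}"
      using c t(1) by (auto simp: B'_def less_Suc_eq)
    then show ?thesis
      using c(1) Suc.hyps(2) by auto
  qed
qed

lemma right_ratio_imp_progression: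
  assumes "finite A" "A \<subseteq> carrier G" "right_ratio G x A"
  shows "\<exists>c\<in>carrier G. A = {c \<otimes> x [^] k | k. k < card A}"
proof -
  have "x \<in> carrier G"
    using assms(3) by (simp add: right_ratio_def)
  then show ?thesis
    using assms torsion_free_group.left_ratio_imp_progression[OF torsion_free_group_opposite_group, of A x]
    by simp
qed

end

lemma (in group) critical_pair_doubleton_left_ratio:
  assumes "critical_pair G {a1, a2} B" "a1 \<noteq> a2"
  shows "left_ratio G (inv a1 \<otimes> a2) B"
proof -
  have a: "a1 \<in> carrier G" "a2 \<in> carrier G" and B: "finite B" "B \<subseteq> carrier G"
    using assms(1) by (auto simp: critical_pair_def)
  have "a1 \<otimes> (inv a1 \<otimes> a2) = a2"
    using a by (simp add: m_assoc[symmetric])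
  then have "inv a1 \<otimes> a2 \<noteq> \<one>"
    using a assms(2) by auto
  then show ?thesis
    using assms card_doubleton_set_mult[OF a B] a
    by (auto simp: left_ratio_def critical_pair_def)
qed

lemma (in group) critical_pair_doubleton_right_ratio:
  assumes "critical_pair G A {b1, b2}" "b1 \<noteq> b2"
  shows "right_ratio G (b2 \<otimes> inv b1) A"
proof -
  have "b1 \<in> carrier G"
    using assms(1) by (simp add: critical_pair_def)
  then show ?thesis
    using assms group.critical_pair_doubleton_left_ratio[OF group_opposite_group, of b1 b2 A]
    by simp
qed

context torsion_free_group
begin

lemma critical_pair_left_ratio:
  assumes "critical_pair G A B" "2 \<le> card A" "2 \<le> card B"
  shows "\<exists>x. left_ratio G x B"
  using assms
proof (induction "card A + card B" arbitrary: A B rule: less_induct)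
  case less
  have fin: "finite A" "finite B"
    using less.prems(1) by (simp_all add: critical_pair_def)
  consider (sub_A) S where "S \<subset> A" "2 \<le> card S" "critical_pair G S B"
    | (sub_B) T where "T \<subset> B" "2 \<le> card T" "critical_pair G A T"
    | (small) "card A = 2 \<or> card B = 2"
    using minimal_critical_pair_card_le_2[OF less.prems(1)] less.prems(2,3)
    by (blast intro: le_antisym)
  then show ?case
  proof cases
    case sub_A
    then have "card S < card A"
      using fin by (simp add: psubset_card_mono)
    then show ?thesis
      using less.hyps[of S B] sub_A less.prems(3) by simp
  next
    case sub_B
    then have "card T < card B"
      using fin by (simp add: psubset_card_mono)
    then obtain x where "left_ratio G x T"
      using less.hyps[of A T] sub_B less.prems(2) by auto
    then have "right_ratio G x A"
      using critical_pair_right_ratio_of_left_ratio sub_B by blast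
    then show ?thesis
      using critical_pair_left_ratio_of_right_ratio less.prems by blast
  next
    case small
    then show ?thesis
    proof
      assume "card A = 2"
      then obtain a1 a2 where "A = {a1, a2}" "a1 \<noteq> a2"
        by (auto simp: card_2_iff)
      then show ?thesis
        using critical_pair_doubleton_left_ratio less.prems(1) by blast
    next
      assume "card B = 2"
      then obtain b1 b2 where "B = {b1, b2}" "b1 \<noteq> b2"
        by (auto simp: card_2_iff)
      then have "right_ratio G (b2 \<otimes> inv b1) A"
        using critical_pair_doubleton_right_ratio less.prems(1) by blast
      then show ?thesis
        using critical_pair_left_ratio_of_right_ratio less.prems by blast
    qed
  qed
qed

lemma critical_pair_right_ratio:
  "critical_pair G A B \<Longrightarrow> 2 \<le> card A \<Longrightarrow> 2 \<le> card B \<Longrightarrow> \<exists>x. right_ratio G x A"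
  using torsion_free_group.critical_pair_left_ratio[OF torsion_free_group_opposite_group, of B A]
  by simp

lemma critical_pair_geom_prog_next:
  assumes crit: "critical_pair G A B" and A2: "2 \<le> card A" and prog: "geom_prog G A a g b"
  shows "\<exists>c. geom_prog G B (inv b) g c"
proof -
  define n where "n = card A"
  have carr: "a \<in> carrier G" "g \<in> carrier G" "b \<in> carrier G" and g: "g \<noteq> \<one>"
    and A: "A = {a \<otimes> g [^] k \<otimes> b | k. k < n}"
    using prog unfolding geom_prog_def n_def by blast+
  have cancel: "b \<otimes> (inv b \<otimes> y) = y" if "y \<in> carrier G" for y
    using carr that by (simp add: m_assoc[symmetric])
  define r where "r = inv b \<otimes> g \<otimes> b"
  have r: "r \<in> carrier G" "r [^] k = inv b \<otimes> g [^] k \<otimes> b" for k :: nat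
    using carr by (simp_all add: r_def pow_conj)
  have "r \<noteq> \<one>"
  proof
    assume "r = \<one>"
    then have "inv b \<otimes> g \<otimes> b = inv b \<otimes> b"
      using carr by (simp add: r_def)
    then have "inv b \<otimes> g = inv b"
      using carr by (subst (asm) right_cancel) simp_all
    then show False
      using carr g by simp
  qed
  have "A = {(a \<otimes> b) \<otimes> r [^] k | k. k < n}"
    using A carr by (simp add: r cancel m_assoc)
  then have "right_ratio G r A"
    using progression_right_ratio[OF r(1) \<open>r \<noteq> \<one>\<close>, of "a \<otimes> b" n] carr A2 n_def by simp
  then have "left_ratio G r B"
    using critical_pair_left_ratio_of_right_ratio crit A2 by blast
  moreover have "finite B" "B \<subseteq> carrier G"
    using crit by (simp_all add: critical_pair_def)
  ultimately obtain c where c: "c \<in> carrier G" "B = {r [^] k \<otimes> c | k. k < card B}"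
    using left_ratio_imp_progression by blast
  then have "B = {inv b \<otimes> g [^] k \<otimes> (b \<otimes> c) | k. k < card B}"
    using carr by (simp add: r m_assoc)
  then have "geom_prog G B (inv b) g (b \<otimes> c)"
    using crit carr c g by (simp add: geom_prog_def critical_pair_def)
  then show ?thesis ..
qed

lemma geom_prog_chain:
  assumes crit: "\<And>j. 1 \<le> j \<Longrightarrow> j < l \<Longrightarrow> critical_pair G (A j) (A (Suc j))"
    and card_A: "\<And>j. 1 \<le> j \<Longrightarrow> j < l \<Longrightarrow> 2 \<le> card (A j)"
    and first: "geom_prog G (A 1) a g b"
  shows "\<exists>\<delta>. \<forall>i\<in>{1..l}. geom_prog G (A i) (inv (\<delta> (i - 1))) g (\<delta> i)"
proof -
  have "\<exists>\<delta>. \<forall>i\<in>{1..j}. geom_prog G (A i) (inv (\<delta> (i - 1))) g (\<delta> i)" if "j \<le> l" for j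
    using that
  proof (induction j)
    case (Suc j)
    then obtain \<delta> where \<delta>: "\<forall>i\<in>{1..j}. geom_prog G (A i) (inv (\<delta> (i - 1))) g (\<delta> i)"
      by auto
    show ?case
    proof (cases "j = 0")
      case True
      have "a \<in> carrier G"
        using first by (simp add: geom_prog_def)
      then show ?thesis
        using first True by (intro exI[of _ "\<lambda>i. if i = 0 then inv a else b"]) auto
    next
      case False
      then have "geom_prog G (A j) (inv (\<delta> (j - 1))) g (\<delta> j)"
        using \<delta> by simp
      moreover have j: "1 \<le> j" "j < l"
        using False Suc.prems by auto
      ultimately obtain c where c: "geom_prog G (A (Suc j)) (inv (\<delta> j)) g c"
        using critical_pair_geom_prog_next[OF crit[OF j] card_A[OF j]] by blast
      have "geom_prog G (A i) (inv ((\<delta>(Suc j := c)) (i - 1))) g ((\<delta>(Suc j := c)) i)"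
        if "i \<in> {1..Suc j}" for i
      proof (cases "i = Suc j")
        case True
        then show ?thesis
          using c by simp
      next
        case False
        then have "i \<le> j" "i - 1 \<noteq> Suc j"
          using that by auto
        then show ?thesis
          using \<delta> that by simp
      qed
      then show ?thesis
        by blast
    qed
  qed simp
  then show ?thesis
    by simp
qed

end

lemma (in group) prod_sets_closed:
  assumes "\<And>i. i \<in> {1..l} \<Longrightarrow> finite (A i) \<and> A i \<noteq> {} \<and> A i \<subseteq> carrier G" "j \<le> l"
  shows "finite (prod_sets G A j) \<and> prod_sets G A j \<noteq> {} \<and> prod_sets G A j \<subseteq> carrier G"
  using assms(2)
proof (induction j)
  case (Suc j)
  then show ?case
    using assms(1)[of "Suc j"] by (auto simp: finite_set_mult set_mult_closed set_mult_def)
qed simp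

context torsion_free_group
begin

lemma prod_sets_tight_step:
  assumes A: "\<And>i. i \<in> {1..l} \<Longrightarrow> finite (A i) \<and> A i \<noteq> {} \<and> A i \<subseteq> carrier G"
    and tight: "card (prod_sets G A l) + l = (\<Sum>i=1..l. card (A i)) + 1"
    and j: "j < l"
  shows "card (prod_sets G A (Suc j)) + 1 = card (prod_sets G A j) + card (A (Suc j))"
proof -
  define E where
    "E j = int (card (prod_sets G A j)) + int j - (\<Sum>i=1..j. int (card (A i)))" for j
  have E_Suc: "E i \<le> E (Suc i)" if "i \<in> {..<l}" for i
  proof -
    have "card (prod_sets G A i) + card (A (Suc i)) \<le> card (prod_sets G A i <#> A (Suc i)) + 1"
      using prod_sets_closed[where A = A and l = l and j = i, OF A] A[of "Suc i"] that
      by (intro card_set_mult_ge) auto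
    then show ?thesis
      by (simp add: E_def)
  qed
  have "E 0 = 1" "E l = 1"
    using tight by (simp_all add: E_def flip: of_nat_sum)
  moreover have "E 0 \<le> E i" "E i \<le> E l" if "i \<le> l" for i
    using that by (auto intro!: lift_Suc_mono_le_ivl[where N = "{..<l}" and f = E, OF E_Suc])
  ultimately have "E j = 1" "E (Suc j) = 1"
    using j by (metis order_antisym less_imp_le_nat Suc_leI)+
  moreover have "E (Suc j) - E j =
      int (card (prod_sets G A (Suc j))) - int (card (prod_sets G A j)) + 1 - int (card (A (Suc j)))"
    by (simp add: E_def)
  ultimately show ?thesis
    by linarith
qed

lemma prod_sets_critical_pair:
  assumes A: "\<And>i. i \<in> {1..l} \<Longrightarrow> finite (A i) \<and> A i \<noteq> {} \<and> A i \<subseteq> carrier G"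
    and tight: "card (prod_sets G A l) + l = (\<Sum>i=1..l. card (A i)) + 1"
    and j: "1 \<le> j" "j < l"
  shows "critical_pair G (A j) (A (Suc j))"
proof -
  obtain i where i: "j = Suc i"
    using j(1) by (cases j) auto
  have P: "finite (prod_sets G A i)" "prod_sets G A i \<noteq> {}" "prod_sets G A i \<subseteq> carrier G"
    using prod_sets_closed[where A = A and l = l and j = i, OF A] i j by auto
  have Aj: "finite (A j)" "A j \<noteq> {}" "A j \<subseteq> carrier G"
    and Aj': "finite (A (Suc j))" "A (Suc j) \<noteq> {}" "A (Suc j) \<subseteq> carrier G"
    using A j by auto
  then have "prod_sets G A (Suc j) = prod_sets G A i <#> (A j <#> A (Suc j))"
    using P i by (simp add: set_mult_assoc)
  moreover have "card (prod_sets G A i) + card (A j <#> A (Suc j))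
      \<le> card (prod_sets G A i <#> (A j <#> A (Suc j))) + 1"
    using P Aj Aj' by (intro card_set_mult_ge) (auto simp: finite_set_mult set_mult_closed set_mult_def)
  ultimately have "card (prod_sets G A i) + card (A j <#> A (Suc j)) \<le> card (prod_sets G A (Suc j)) + 1"
    by simp
  moreover have "card (A j) + card (A (Suc j)) \<le> card (A j <#> A (Suc j)) + 1"
    using Aj Aj' by (rule card_set_mult_ge)
  moreover have "card (prod_sets G A (Suc j)) + 1 = card (prod_sets G A j) + card (A (Suc j))"
    using prod_sets_tight_step[OF A tight j(2)] .
  moreover have "card (prod_sets G A j) + 1 = card (prod_sets G A i) + card (A j)"
    using prod_sets_tight_step[OF A tight, of i] i j by simp
  ultimately have "card (A j <#> A (Suc j)) + 1 = card (A j) + card (A (Suc j))"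
    by linarith
  then show ?thesis
    using Aj Aj' by (simp add: critical_pair_def)
qed

end

theorem lemma3p9:
  fixes G (structure) and A :: "nat \<Rightarrow> 'a set" and l :: nat
  assumes "group G" and "torsion_free G" and "l \<ge> 2"
    and "\<And>i. i \<in> {1..l} \<Longrightarrow> A i \<subseteq> carrier G"
    and "\<And>i. i \<in> {1..l} \<Longrightarrow> finite (A i)"
    and "\<And>i. i \<in> {1..l} \<Longrightarrow> card (A i) \<ge> 2"
    and "card (prod_sets G A l) + l = (\<Sum>i=1..l. card (A i)) + 1"
  shows "\<exists>g \<in> carrier G. g \<noteq> \<one> \<and>
           (\<exists>\<alpha> \<beta>. (\<forall>i \<in> {1..l}. \<alpha> i \<in> carrier G \<and> \<beta> i \<in> carrier G \<and>
                                  geom_prog G (A i) (\<alpha> i) g (\<beta> i)) \<and>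
                  (\<forall>i \<in> {1..<l}. \<alpha> (i + 1) = inv (\<beta> i)))"
proof -
  interpret torsion_free_group G
    using assms(1,2) by (simp add: torsion_free_group_def torsion_free_group_axioms_def)
  have A: "finite (A i) \<and> A i \<noteq> {} \<and> A i \<subseteq> carrier G" if "i \<in> {1..l}" for i
    using assms(4-6)[OF that] by auto
  have crit: "critical_pair G (A j) (A (Suc j))" if "1 \<le> j" "j < l" for j
    using prod_sets_critical_pair[OF A assms(7) that] .
  have card_A: "2 \<le> card (A j)" if "1 \<le> j" "j \<le> l" for j
    using assms(6) that by simp
  obtain g where g: "right_ratio G g (A 1)"
    using critical_pair_right_ratio[OF crit[of 1] card_A[of 1] card_A[of "Suc 1"]] assms(3) by auto
  moreover have "finite (A 1)" "A 1 \<subseteq> carrier G"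
    using A assms(3) by auto
  ultimately obtain a where "a \<in> carrier G" "A 1 = {a \<otimes> g [^] k | k. k < card (A 1)}"
    using right_ratio_imp_progression by blast
  then have "geom_prog G (A 1) a g \<one>"
    using g A[of 1] assms(3) by (simp add: geom_prog_def right_ratio_def)
  moreover have "2 \<le> card (A j)" if "1 \<le> j" "j < l" for j
    using card_A that by simp
  ultimately obtain \<delta> where "\<forall>i\<in>{1..l}. geom_prog G (A i) (inv (\<delta> (i - 1))) g (\<delta> i)"
    using geom_prog_chain[where A = A and l = l, OF crit] by blast
  then show ?thesis
    using g by (intro bexI[of _ g] conjI exI[of _ "\<lambda>i. inv (\<delta> (i - 1))"] exI[of _ \<delta>])
      (auto simp: geom_prog_def right_ratio_def)
qed

end
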